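(* For any finite simple graphs $G$ and $H$ without isolated vertices, $$\gamma_{tR}(G\times H)\le 2\gamma_{t}(G)\gamma_{t}(H).$$
   Context: A set $D\subseteq V(G)$ is total dominating if every vertex of $G$ has a neighbor in $D$; $\gamma_t(G)$ is the minimum size of a total dominating set. A total Roman dominating function on $G$ is a map $f:V(G)\to\{0,1,2\}$ such that every vertex with label 0 has a neighbor with label 2 and the subgraph induced by vertices with positive labels has no isolated vertices; $\gamma_{tR}(G)$ is the minimum of $\sum_v f(v)$ over such $f$. The direct product $G\times H$ has vertex set $V(G)\times V(H)$, with $(g,h)(g',h')$ an edge iff $gg'\in E(G)$ and $hh'\in E(H)$. *)

theory Defs
  imports Main
begin

definition simple_graph :: "'a set \<Rightarrow> ('a \<Rightarrow> 'a \<Rightarrow> bool) \<Rightarrow> bool" where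
  "simple_graph V E \<longleftrightarrow> finite V \<and> (\<forall>x y. E x y \<longrightarrow> x \<in> V \<and> y \<in> V)
     \<and> (\<forall>x y. E x y \<longrightarrow> E y x) \<and> (\<forall>x. \<not> E x x)"

definition no_isolated :: "'a set \<Rightarrow> ('a \<Rightarrow> 'a \<Rightarrow> bool) \<Rightarrow> bool" where
  "no_isolated V E \<longleftrightarrow> (\<forall>v\<in>V. \<exists>u. E v u)"

definition total_dominating :: "'a set \<Rightarrow> ('a \<Rightarrow> 'a \<Rightarrow> bool) \<Rightarrow> 'a set \<Rightarrow> bool" where
  "total_dominating V E D \<longleftrightarrow> D \<subseteq> V \<and> (\<forall>v\<in>V. \<exists>u\<in>D. E v u)"

definition gamma_t :: "'a set \<Rightarrow> ('a \<Rightarrow> 'a \<Rightarrow> bool) \<Rightarrow> nat" where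
  "gamma_t V E = Min {card D | D. total_dominating V E D}"

definition total_roman_dom :: "'a set \<Rightarrow> ('a \<Rightarrow> 'a \<Rightarrow> bool) \<Rightarrow> ('a \<Rightarrow> nat) \<Rightarrow> bool" where
  "total_roman_dom V E f \<longleftrightarrow>
     (\<forall>v\<in>V. f v \<le> 2) \<and> (\<forall>v. v \<notin> V \<longrightarrow> f v = 0)
     \<and> (\<forall>v\<in>V. f v = 0 \<longrightarrow> (\<exists>u. E v u \<and> f u = 2))
     \<and> (\<forall>v\<in>V. f v > 0 \<longrightarrow> (\<exists>u. E v u \<and> f u > 0))"

definition gamma_tR :: "'a set \<Rightarrow> ('a \<Rightarrow> 'a \<Rightarrow> bool) \<Rightarrow> nat" where
  "gamma_tR V E = Min {(\<Sum>v\<in>V. f v) | f. total_roman_dom V E f}"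

definition direct_prod_edge ::
  "('a \<Rightarrow> 'a \<Rightarrow> bool) \<Rightarrow> ('b \<Rightarrow> 'b \<Rightarrow> bool) \<Rightarrow> ('a \<times> 'b) \<Rightarrow> ('a \<times> 'b) \<Rightarrow> bool" where
  "direct_prod_edge E F p q \<longleftrightarrow> E (fst p) (fst q) \<and> F (snd p) (snd q)"

end

theory Submission
  imports Defs
begin

text \<open>If \<open>D\<close> and \<open>D'\<close> are total dominating sets of \<open>G\<close> and \<open>H\<close>, then \<open>D \<times> D'\<close> is one of
\<open>G \<times> H\<close>: a neighbour of \<open>(g, h)\<close> is obtained coordinatewise. Labelling any total dominating
set with 2 and everything else with 0 is a total Roman dominating function, so
\<open>\<gamma>\<^sub>t\<^sub>R(G \<times> H) \<le> 2 |D \<times> D'| = 2 \<gamma>\<^sub>t(G) \<gamma>\<^sub>t(H)\<close> for minimum \<open>D\<close>, \<open>D'\<close>.\<close>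

lemma gamma_t_attained:
  assumes "simple_graph V E" and "no_isolated V E"
  obtains D where "total_dominating V E D" and "card D = gamma_t V E"
proof -
  let ?S = "{card D | D. total_dominating V E D}"
  have "finite V" using assms(1) by (simp add: simple_graph_def)
  have "total_dominating V E V"
    using assms unfolding total_dominating_def simple_graph_def no_isolated_def by blast
  then have "?S \<noteq> {}" by blast
  moreover have "?S \<subseteq> {..card V}"
    using \<open>finite V\<close> by (auto simp: total_dominating_def intro: card_mono)
  then have "finite ?S" using finite_subset by blast
  ultimately have "gamma_t V E \<in> ?S" unfolding gamma_t_def by (rule Min_in[rotated])
  then show ?thesis using that by force
qed

lemma total_dominating_direct_prod:
  assumes "total_dominating V E D" and "total_dominating W F D'"
  shows "total_dominating (V \<times> W) (direct_prod_edge E F) (D \<times> D')"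
  using assms unfolding total_dominating_def direct_prod_edge_def by fastforce

lemma total_roman_dom_of_total_dominating:
  assumes "total_dominating V E D"
  shows "total_roman_dom V E (\<lambda>v. if v \<in> D then 2 else 0)"
  using assms unfolding total_roman_dom_def total_dominating_def by auto

lemma gamma_tR_le_sum:
  assumes "finite V" and "total_roman_dom V E f"
  shows "gamma_tR V E \<le> (\<Sum>v\<in>V. f v)"
proof -
  let ?S = "{(\<Sum>v\<in>V. g v) | g. total_roman_dom V E g}"
  have "(\<Sum>v\<in>V. g v) \<le> 2 * card V" if "total_roman_dom V E g" for g
  proof -
    have "(\<Sum>v\<in>V. g v) \<le> (\<Sum>v\<in>V. 2)"
      using that by (intro sum_mono) (auto simp: total_roman_dom_def)
    then show ?thesis by simp
  qed
  then have "?S \<subseteq> {..2 * card V}" by auto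
  then have "finite ?S" using finite_subset by blast
  moreover have "(\<Sum>v\<in>V. f v) \<in> ?S" using assms(2) by blast
  ultimately show ?thesis unfolding gamma_tR_def by (rule Min_le)
qed

lemma gamma_tR_le_twice_card_total_dominating:
  assumes "finite V" and "total_dominating V E D"
  shows "gamma_tR V E \<le> 2 * card D"
proof -
  have "D \<subseteq> V" using assms(2) by (simp add: total_dominating_def)
  have "gamma_tR V E \<le> (\<Sum>v\<in>V. if v \<in> D then 2 else 0)"
    using assms by (intro gamma_tR_le_sum total_roman_dom_of_total_dominating)
  also have "\<dots> = (\<Sum>v\<in>V \<inter> D. 2)"
    using assms(1) by (simp only: sum.inter_restrict)
  also have "\<dots> = 2 * card D"
    using \<open>D \<subseteq> V\<close> by (simp add: Int_absorb1)
  finally show ?thesis .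
qed

theorem corollary2p4:
  fixes V :: "'a set" and E :: "'a \<Rightarrow> 'a \<Rightarrow> bool"
    and W :: "'b set" and F :: "'b \<Rightarrow> 'b \<Rightarrow> bool"
  assumes "simple_graph V E" and "no_isolated V E"
    and "simple_graph W F" and "no_isolated W F"
  shows "gamma_tR (V \<times> W) (direct_prod_edge E F) \<le> 2 * gamma_t V E * gamma_t W F"
proof -
  obtain D where D: "total_dominating V E D" "card D = gamma_t V E"
    using gamma_t_attained[OF assms(1,2)] .
  obtain D' where D': "total_dominating W F D'" "card D' = gamma_t W F"
    using gamma_t_attained[OF assms(3,4)] .
  have "finite (V \<times> W)" using assms(1,3) by (simp add: simple_graph_def)
  then have "gamma_tR (V \<times> W) (direct_prod_edge E F) \<le> 2 * card (D \<times> D')"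
    using total_dominating_direct_prod[OF D(1) D'(1)]
    by (rule gamma_tR_le_twice_card_total_dominating)
  then show ?thesis using D(2) D'(2) by (simp add: card_cartesian_product)
qed

end
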